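(* Let $A=\mathbb{C}Q/I$ be a toupie algebra with $a>0$. The centre of the Lie algebra $\mathrm{HH}^1(A)$ is the $\mathbb{C}$-vector space spanned by $C''_1=\{y_i\}$, where $y_i$ is the class of $\alpha^i_0\|\alpha^i_0$ and $\alpha^{(i)}$ ranges over the branches containing monomial relations.
   Context: A finite quiver $Q$ is a toupie quiver if it has a unique source $0$, a unique sink $\omega$, and every other vertex is the source of exactly one arrow and the target of exactly one arrow. Paths are composed left to right. A branch is a path from $0$ to $\omega$; the arrows of a branch $\alpha^{(i)}$ are $\alpha^i_0,\alpha^i_1,\dots$, $\alpha^i_0$ starting at $0$. A toupie algebra is $A=\mathbb{C}Q/I$ with $Q$ toupie and $I$ an admissible ideal generated by monomial relations (paths inside one branch) and non-monomial relations (linear combinations of branches). $a$ is the number of arrows from $0$ to $\omega$. $E=\mathbb{C}Q_0$. For an arrow $\gamma$ and $h\in e_{s(\gamma)}Ae_{t(\gamma)}$, $\gamma\|h$ is the derivation of $A$ vanishing on $E$ sending $\gamma$ to $h$ and all other arrows to $0$ (when it defines a derivation); $\mathrm{HH}^1(A)$ is the space of derivations of $A$ vanishing on $E$ modulo inner derivations $[e,-]$, $e\in E$, a Lie algebra with the Gerstenhaber bracket (commutator of derivations). *)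

theory Defs
  imports Complex_Main "HOL-Library.Function_Algebras"
begin

text \<open>A toupie quiver is determined (up to isomorphism) by its
branches: branch i (i < n) is a path of length L i >= 1 from the source 0 to the
sink omega; its arrows are alpha^i_m (m < L i), alpha^i_m going from position m to
position m+1 of branch i.  Position 0 of every branch is the source, position L i
is the sink, and the positions 0 < j < L i are the interior vertices Mid i j.\<close>

datatype vtx = Src | Snk | Mid nat nat

text \<open>Paths: trivial paths at vertices, and Pth i j k = alpha^i_j ... alpha^i_(k-1)
(j < k <= L i); these are all paths of a toupie quiver.\<close>

datatype path = Triv vtx | Pth nat nat nat

definition vpos :: "(nat \<Rightarrow> nat) \<Rightarrow> nat \<Rightarrow> nat \<Rightarrow> vtx" where
  "vpos L i j = (if j = 0 then Src else if j = L i then Snk else Mid i j)"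

definition vertices :: "nat \<Rightarrow> (nat \<Rightarrow> nat) \<Rightarrow> vtx set" where
  "vertices n L = {Src, Snk} \<union> {Mid i j | i j. i < n \<and> 0 < j \<and> j < L i}"

definition paths :: "nat \<Rightarrow> (nat \<Rightarrow> nat) \<Rightarrow> path set" where
  "paths n L = Triv ` vertices n L \<union> {Pth i j k | i j k. i < n \<and> j < k \<and> k \<le> L i}"

fun psrc :: "(nat \<Rightarrow> nat) \<Rightarrow> path \<Rightarrow> vtx" where
  "psrc L (Triv v) = v"
| "psrc L (Pth i j k) = vpos L i j"

fun ptgt :: "(nat \<Rightarrow> nat) \<Rightarrow> path \<Rightarrow> vtx" where
  "ptgt L (Triv v) = v"
| "ptgt L (Pth i j k) = vpos L i k"

text \<open>Concatenation (left to right) of composable paths.\<close>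
fun pcomp :: "path \<Rightarrow> path \<Rightarrow> path" where
  "pcomp (Triv v) q = q"
| "pcomp (Pth i j k) (Triv v) = Pth i j k"
| "pcomp (Pth i j k) (Pth i' j' k') = Pth i j k'"

definition CQ :: "nat \<Rightarrow> (nat \<Rightarrow> nat) \<Rightarrow> (path \<Rightarrow> complex) set" where
  "CQ n L = {x. \<forall>p. p \<notin> paths n L \<longrightarrow> x p = 0}"

definition bv :: "path \<Rightarrow> (path \<Rightarrow> complex)" where
  "bv p = (\<lambda>r. if r = p then 1 else 0)"

definition scal :: "complex \<Rightarrow> (path \<Rightarrow> complex) \<Rightarrow> (path \<Rightarrow> complex)" where
  "scal c x = (\<lambda>p. c * x p)"

definition mult :: "nat \<Rightarrow> (nat \<Rightarrow> nat) \<Rightarrow> (path \<Rightarrow> complex) \<Rightarrow> (path \<Rightarrow> complex) \<Rightarrow> (path \<Rightarrow> complex)" where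
  "mult n L x y = (\<lambda>r. \<Sum>(p, q) \<in> paths n L \<times> paths n L.
      if ptgt L p = psrc L q \<and> pcomp p q = r then x p * y q else 0)"

definition branch :: "(nat \<Rightarrow> nat) \<Rightarrow> nat \<Rightarrow> path" where
  "branch L i = Pth i 0 (L i)"

inductive_set gen_ideal :: "nat \<Rightarrow> (nat \<Rightarrow> nat) \<Rightarrow> (path \<Rightarrow> complex) set \<Rightarrow> (path \<Rightarrow> complex) set"
  for n L G where
  gen: "g \<in> G \<Longrightarrow> g \<in> gen_ideal n L G"
| zero: "0 \<in> gen_ideal n L G"
| add: "x \<in> gen_ideal n L G \<Longrightarrow> y \<in> gen_ideal n L G \<Longrightarrow> x + y \<in> gen_ideal n L G"
| smult: "x \<in> gen_ideal n L G \<Longrightarrow> scal c x \<in> gen_ideal n L G"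
| lmult: "x \<in> gen_ideal n L G \<Longrightarrow> a \<in> CQ n L \<Longrightarrow> mult n L a x \<in> gen_ideal n L G"
| rmult: "x \<in> gen_ideal n L G \<Longrightarrow> a \<in> CQ n L \<Longrightarrow> mult n L x a \<in> gen_ideal n L G"

text \<open>Admissible toupie generators: each generator is either a monomial relation
(a path of length >= 2 inside one branch) or a non-monomial relation (a linear
combination of branches; admissibility forces coefficient 0 on branches of length 1).\<close>
definition toupie_generators :: "nat \<Rightarrow> (nat \<Rightarrow> nat) \<Rightarrow> (path \<Rightarrow> complex) set \<Rightarrow> bool" where
  "toupie_generators n L G \<longleftrightarrow>
     (\<forall>g\<in>G. (\<exists>i j k. i < n \<and> j < k \<and> k \<le> L i \<and> 2 \<le> k - j \<and> g = bv (Pth i j k))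
          \<or> (\<exists>c :: nat \<Rightarrow> complex. (\<forall>i<n. L i = 1 \<longrightarrow> c i = 0)
                 \<and> g = (\<Sum>i<n. scal (c i) (bv (branch L i)))))"

definition num_a :: "nat \<Rightarrow> (nat \<Rightarrow> nat) \<Rightarrow> nat" where
  "num_a n L = card {i. i < n \<and> L i = 1}"

text \<open>Derivations of A = CQ/I vanishing on E, represented by lifts d : CQ -> CQ that
respect congruence modulo I and satisfy linearity / Leibniz rule modulo I.\<close>
definition is_der :: "nat \<Rightarrow> (nat \<Rightarrow> nat) \<Rightarrow> (path \<Rightarrow> complex) set
    \<Rightarrow> ((path \<Rightarrow> complex) \<Rightarrow> (path \<Rightarrow> complex)) \<Rightarrow> bool" where
  "is_der n L I d \<longleftrightarrow>
     (\<forall>x\<in>CQ n L. d x \<in> CQ n L)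
   \<and> (\<forall>x\<in>CQ n L. \<forall>y\<in>CQ n L. x - y \<in> I \<longrightarrow> d x - d y \<in> I)
   \<and> (\<forall>x\<in>CQ n L. \<forall>y\<in>CQ n L. d (x + y) - (d x + d y) \<in> I)
   \<and> (\<forall>c. \<forall>x\<in>CQ n L. d (scal c x) - scal c (d x) \<in> I)
   \<and> (\<forall>x\<in>CQ n L. \<forall>y\<in>CQ n L. d (mult n L x y) - (mult n L (d x) y + mult n L x (d y)) \<in> I)
   \<and> (\<forall>v\<in>vertices n L. d (bv (Triv v)) \<in> I)"

definition in_E :: "nat \<Rightarrow> (nat \<Rightarrow> nat) \<Rightarrow> (path \<Rightarrow> complex) \<Rightarrow> bool" where
  "in_E n L e \<longleftrightarrow> e \<in> CQ n L \<and> (\<forall>i j k. e (Pth i j k) = 0)"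

definition inner_der :: "nat \<Rightarrow> (nat \<Rightarrow> nat) \<Rightarrow> (path \<Rightarrow> complex) \<Rightarrow> (path \<Rightarrow> complex) \<Rightarrow> (path \<Rightarrow> complex)" where
  "inner_der n L e x = mult n L e x - mult n L x e"

text \<open>gamma || h for gamma = alpha^i_m : the derivation of CQ vanishing on E sending
alpha^i_m to h and all other arrows to 0 (Leibniz rule on paths).\<close>
definition subp :: "(nat \<Rightarrow> nat) \<Rightarrow> nat \<Rightarrow> nat \<Rightarrow> nat \<Rightarrow> path" where
  "subp L i j k = (if j = k then Triv (vpos L i j) else Pth i j k)"

fun arrow_contrib :: "nat \<Rightarrow> (nat \<Rightarrow> nat) \<Rightarrow> nat \<Rightarrow> nat \<Rightarrow> (path \<Rightarrow> complex) \<Rightarrow> path \<Rightarrow> (path \<Rightarrow> complex)" where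
  "arrow_contrib n L i m h (Triv v) = 0"
| "arrow_contrib n L i m h (Pth i' j k) =
     (if i' = i \<and> j \<le> m \<and> m < k
      then mult n L (bv (subp L i j m)) (mult n L h (bv (subp L i (Suc m) k))) else 0)"

definition arrow_der :: "nat \<Rightarrow> (nat \<Rightarrow> nat) \<Rightarrow> nat \<Rightarrow> nat \<Rightarrow> (path \<Rightarrow> complex)
    \<Rightarrow> (path \<Rightarrow> complex) \<Rightarrow> (path \<Rightarrow> complex)" where
  "arrow_der n L i m h x = (\<Sum>p\<in>paths n L. scal (x p) (arrow_contrib n L i m h p))"

definition y_der :: "nat \<Rightarrow> (nat \<Rightarrow> nat) \<Rightarrow> nat \<Rightarrow> (path \<Rightarrow> complex) \<Rightarrow> (path \<Rightarrow> complex)" where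
  "y_der n L i = arrow_der n L i 0 (bv (Pth i 0 1))"

text \<open>Branches containing monomial relations: some path inside the branch lies in I.\<close>
definition mono_branches :: "nat \<Rightarrow> (nat \<Rightarrow> nat) \<Rightarrow> (path \<Rightarrow> complex) set \<Rightarrow> nat set" where
  "mono_branches n L I = {i. i < n \<and> (\<exists>j k. j < k \<and> k \<le> L i \<and> bv (Pth i j k) \<in> I)}"

text \<open>The class of d lies in the centre of the Lie algebra HH^1(A): its commutator with
every derivation is inner.\<close>
definition hh1_central :: "nat \<Rightarrow> (nat \<Rightarrow> nat) \<Rightarrow> (path \<Rightarrow> complex) set
    \<Rightarrow> ((path \<Rightarrow> complex) \<Rightarrow> (path \<Rightarrow> complex)) \<Rightarrow> bool" where
  "hh1_central n L I d \<longleftrightarrow>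
     (\<forall>d'. is_der n L I d' \<longrightarrow>
        (\<exists>e. in_E n L e \<and> (\<forall>x\<in>CQ n L. d (d' x) - d' (d x) - inner_der n L e x \<in> I)))"

definition in_span_y :: "nat \<Rightarrow> (nat \<Rightarrow> nat) \<Rightarrow> (path \<Rightarrow> complex) set \<Rightarrow> nat set
    \<Rightarrow> ((path \<Rightarrow> complex) \<Rightarrow> (path \<Rightarrow> complex)) \<Rightarrow> bool" where
  "in_span_y n L I S d \<longleftrightarrow>
     (\<exists>(c :: nat \<Rightarrow> complex) e. in_E n L e \<and>
        (\<forall>x\<in>CQ n L. d x - (\<Sum>i\<in>S. scal (c i) (y_der n L i x)) - inner_der n L e x \<in> I))"

end

theory Submission
  imports Defs
begin

text \<open>The y_i and the inner derivations are weight derivations: they multiply every path by a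
  weight that is additive under concatenation. If a weight takes one common value on all branches
  not lying in I, its weight derivation preserves I and commutes with every derivation modulo I;
  the combinations of the y_i (over monomial branches) and of inner derivations are of this kind.
  Conversely, a central derivation d multiplies every arrow by a scalar modulo I: on a branch of
  length at least 2 because the arrow is the only path between its endpoints, on an arrow from 0
  to omega by commuting d with alpha||alpha. Commuting d with alpha^a_0||(branch k) for an arrow
  alpha^a_0 from 0 to omega shows that these scalars have the same sum along all branches not in
  I. Such scalars are the weights of a combination of the y_i plus an inner derivation, and two
  derivations that agree modulo I on vertices and arrows agree modulo I everywhere.\<close>

section \<open>The path algebra\<close>

lemma finite_vertices: "finite (vertices n L)"
proof -
  have "{Mid i j | i j. i < n \<and> 0 < j \<and> j < L i} = (\<Union>i\<in>{..<n}. Mid i ` {0<..<L i})" by auto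
  thus ?thesis unfolding vertices_def by auto
qed

lemma finite_paths: "finite (paths n L)"
proof -
  have "{Pth i j k | i j k. i < n \<and> j < k \<and> k \<le> L i}
      = (\<Union>i\<in>{..<n}. \<Union>k\<in>{..L i}. (\<lambda>j. Pth i j k) ` {..<k})" by auto
  thus ?thesis unfolding paths_def using finite_vertices by auto
qed

lemma Pth_in_paths [simp]: "Pth i j k \<in> paths n L \<longleftrightarrow> i < n \<and> j < k \<and> k \<le> L i"
  by (auto simp: paths_def)

lemma Triv_in_paths [simp]: "Triv v \<in> paths n L \<longleftrightarrow> v \<in> vertices n L"
  by (auto simp: paths_def)

lemma vpos_in_vertices: "i < n \<Longrightarrow> j \<le> L i \<Longrightarrow> vpos L i j \<in> vertices n L"
  by (auto simp: vpos_def vertices_def)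

lemma psrc_in_vertices: "p \<in> paths n L \<Longrightarrow> psrc L p \<in> vertices n L"
  by (cases p) (auto intro: vpos_in_vertices)

lemma ptgt_in_vertices: "p \<in> paths n L \<Longrightarrow> ptgt L p \<in> vertices n L"
  by (cases p) (auto intro: vpos_in_vertices)

lemma pcomp_in_paths:
  assumes "p \<in> paths n L" "q \<in> paths n L" "ptgt L p = psrc L q"
  shows "pcomp p q \<in> paths n L"
  using assms by (cases p; cases q) (auto simp: vpos_def split: if_splits)

lemma sum_apply: "(\<Sum>i\<in>A. f i) x = (\<Sum>i\<in>A. f i x)"
  by (induction A rule: infinite_finite_induct) auto

lemma scal_apply: "scal c x r = c * x r"
  by (simp add: scal_def)

lemma bv_apply: "bv p r = (if r = p then 1 else 0)"
  by (simp add: bv_def)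

lemma mult_outside_paths: "r \<notin> paths n L \<Longrightarrow> mult n L x y r = 0"
  unfolding mult_def by (rule sum.neutral) (use pcomp_in_paths in fastforce)

definition factorizations :: "nat \<Rightarrow> (nat \<Rightarrow> nat) \<Rightarrow> path \<Rightarrow> (path \<times> path) set" where
  "factorizations n L r = {(p, q). p \<in> paths n L \<and> q \<in> paths n L \<and> ptgt L p = psrc L q \<and> pcomp p q = r}"

lemma mult_as_factorization_sum: "mult n L x y r = (\<Sum>(p, q) \<in> factorizations n L r. x p * y q)"
proof -
  have "factorizations n L r
      = {pq \<in> paths n L \<times> paths n L. ptgt L (fst pq) = psrc L (snd pq) \<and> pcomp (fst pq) (snd pq) = r}"
    by (auto simp: factorizations_def)
  thus ?thesis
    unfolding mult_def case_prod_beta by (subst sum.inter_filter[symmetric]) (auto simp: finite_paths)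
qed

lemma factorizations_Triv: "v \<in> vertices n L \<Longrightarrow> factorizations n L (Triv v) = {(Triv v, Triv v)}"
proof (intro set_eqI iffI)
  fix pq assume "pq \<in> factorizations n L (Triv v)"
  then obtain p q where "pq = (p, q)" "ptgt L p = psrc L q" "pcomp p q = Triv v"
    by (auto simp: factorizations_def)
  thus "pq \<in> {(Triv v, Triv v)}" by (cases p; cases q) auto
qed (auto simp: factorizations_def)

lemma factorizations_Pth:
  assumes r: "Pth i j k \<in> paths n L"
  shows "factorizations n L (Pth i j k) = {(Triv (vpos L i j), Pth i j k), (Pth i j k, Triv (vpos L i k))}
      \<union> (\<lambda>m. (Pth i j m, Pth i m k)) ` {j<..<k}"
proof (intro set_eqI iffI)
  fix pq assume "pq \<in> factorizations n L (Pth i j k)"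
  then obtain p q where pq: "pq = (p, q)" "p \<in> paths n L" "q \<in> paths n L"
    "ptgt L p = psrc L q" "pcomp p q = Pth i j k" by (auto simp: factorizations_def)
  show "pq \<in> {(Triv (vpos L i j), Pth i j k), (Pth i j k, Triv (vpos L i k))}
      \<union> (\<lambda>m. (Pth i j m, Pth i m k)) ` {j<..<k}"
  proof (cases p; cases q)
    fix i1 j1 k1 i2 j2 k2 assume p: "p = Pth i1 j1 k1" and q: "q = Pth i2 j2 k2"
    have e: "i1 = i" "j1 = j" "k2 = k" using pq p q by auto
    have "vpos L i k1 = vpos L i2 j2" "j < k1" "k1 \<le> L i" "i2 < n" "j2 < k" "k \<le> L i2"
      using pq p q e by auto
    hence "i2 = i \<and> j2 = k1" by (auto simp: vpos_def split: if_splits)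
    thus ?thesis using pq p q e \<open>j < k1\<close> \<open>j2 < k\<close> by auto
  qed (use pq in auto)
qed (use r vpos_in_vertices in \<open>auto simp: factorizations_def\<close>)

lemma mult_Triv: "v \<in> vertices n L \<Longrightarrow> mult n L x y (Triv v) = x (Triv v) * y (Triv v)"
  by (simp add: mult_as_factorization_sum factorizations_Triv)

lemma mult_Pth:
  assumes r: "Pth i j k \<in> paths n L"
  shows "mult n L x y (Pth i j k) = x (Triv (vpos L i j)) * y (Pth i j k)
       + x (Pth i j k) * y (Triv (vpos L i k)) + (\<Sum>m\<in>{j<..<k}. x (Pth i j m) * y (Pth i m k))"
proof -
  have "(\<Sum>(p, q) \<in> (\<lambda>m. (Pth i j m, Pth i m k)) ` {j<..<k}. x p * y q)
      = (\<Sum>m\<in>{j<..<k}. x (Pth i j m) * y (Pth i m k))"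
    by (subst sum.reindex) (auto simp: inj_on_def)
  thus ?thesis unfolding mult_as_factorization_sum factorizations_Pth[OF r]
    by (subst sum.union_disjoint) auto
qed

lemma mult_diff_left: "mult n L (x - y) z = mult n L x z - mult n L y z"
  unfolding mult_def
  by (rule ext) (simp add: sum_subtractf[symmetric] algebra_simps case_prod_beta if_distrib cong: if_cong)

lemma mult_diff_right: "mult n L z (x - y) = mult n L z x - mult n L z y"
  unfolding mult_def
  by (rule ext) (simp add: sum_subtractf[symmetric] algebra_simps case_prod_beta if_distrib cong: if_cong)

lemma mult_scal_left: "mult n L (scal c x) z = scal c (mult n L x z)"
  unfolding mult_def scal_def
  by (rule ext) (simp add: sum_distrib_left algebra_simps case_prod_beta if_distrib cong: if_cong)

lemma mult_scal_right: "mult n L z (scal c x) = scal c (mult n L z x)"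
  unfolding mult_def scal_def
  by (rule ext) (simp add: sum_distrib_left algebra_simps case_prod_beta if_distrib cong: if_cong)

lemma mult_zero_left [simp]: "mult n L 0 z = 0"
  using mult_diff_left[of n L z z z] by simp

lemma mult_zero_right [simp]: "mult n L z 0 = 0"
  using mult_diff_right[of n L z z z] by simp

lemma mult_in_CQ: "mult n L x y \<in> CQ n L"
  unfolding CQ_def using mult_outside_paths by auto

lemma CQ_add: "x \<in> CQ n L \<Longrightarrow> y \<in> CQ n L \<Longrightarrow> x + y \<in> CQ n L"
  by (auto simp: CQ_def)

lemma CQ_scal: "x \<in> CQ n L \<Longrightarrow> scal c x \<in> CQ n L"
  by (auto simp: CQ_def scal_def)

lemma CQ_bv: "p \<in> paths n L \<Longrightarrow> bv p \<in> CQ n L"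
  by (auto simp: CQ_def bv_def)

lemma CQ_sum: "(\<And>i. i \<in> A \<Longrightarrow> f i \<in> CQ n L) \<Longrightarrow> (\<Sum>i\<in>A. f i) \<in> CQ n L"
  by (induction A rule: infinite_finite_induct) (auto intro: CQ_add simp: CQ_def)

lemma CQ_expand: "x \<in> CQ n L \<Longrightarrow> x = (\<Sum>p\<in>paths n L. scal (x p) (bv p))"
  by (rule ext) (auto simp: sum_apply scal_apply bv_apply finite_paths CQ_def if_distrib cong: if_cong)

lemma mult_vertex_left:
  "v \<in> vertices n L \<Longrightarrow> mult n L (bv (Triv v)) y r = (if r \<in> paths n L \<and> psrc L r = v then y r else 0)"
  by (cases "r \<in> paths n L"; cases r) (auto simp: mult_outside_paths mult_Triv mult_Pth bv_apply)

lemma mult_vertex_right: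
  "v \<in> vertices n L \<Longrightarrow> mult n L y (bv (Triv v)) r = (if r \<in> paths n L \<and> ptgt L r = v then y r else 0)"
  by (cases "r \<in> paths n L"; cases r) (auto simp: mult_outside_paths mult_Triv mult_Pth bv_apply)

lemma mult_bv:
  assumes p: "p \<in> paths n L" and q: "q \<in> paths n L" and c: "ptgt L p = psrc L q"
  shows "mult n L (bv p) (bv q) = bv (pcomp p q)"
proof (rule ext)
  fix r
  have "mult n L (bv p) (bv q) r
      = (\<Sum>pq\<in>paths n L \<times> paths n L. if pq = (p, q) then bv (pcomp p q) r else 0)"
    unfolding mult_def case_prod_beta by (rule sum.cong) (auto simp: bv_apply c)
  thus "mult n L (bv p) (bv q) r = bv (pcomp p q) r" using p q by (simp add: finite_paths)
qed

lemma gen_ideal_uminus: "x \<in> gen_ideal n L G \<Longrightarrow> - x \<in> gen_ideal n L G"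
proof -
  assume "x \<in> gen_ideal n L G"
  moreover have "scal (-1) x = - x" by (simp add: scal_def fun_eq_iff)
  ultimately show ?thesis by (metis gen_ideal.smult)
qed

lemma gen_ideal_diff: "x \<in> gen_ideal n L G \<Longrightarrow> y \<in> gen_ideal n L G \<Longrightarrow> x - y \<in> gen_ideal n L G"
  using gen_ideal.add[of x n L G "- y"] gen_ideal_uminus[of y n L G] by simp

lemma gen_ideal_sum: "(\<And>i. i \<in> A \<Longrightarrow> f i \<in> gen_ideal n L G) \<Longrightarrow> (\<Sum>i\<in>A. f i) \<in> gen_ideal n L G"
  by (induction A rule: infinite_finite_induct) (auto intro: gen_ideal.add gen_ideal.zero)

lemma gen_ideal_diff_cancel: "x - y \<in> gen_ideal n L G \<Longrightarrow> y \<in> gen_ideal n L G \<Longrightarrow> x \<in> gen_ideal n L G"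
  using gen_ideal.add[of "x - y" n L G y] by simp

lemma gen_ideal_diff_add_cancel_left:
  "x - (y + z) \<in> gen_ideal n L G \<Longrightarrow> y \<in> gen_ideal n L G \<Longrightarrow> x - z \<in> gen_ideal n L G"
  using gen_ideal.add[of "x - (y + z)" n L G y] by (simp add: algebra_simps)

lemma gen_ideal_diff_add_cancel_right:
  "x - (y + z) \<in> gen_ideal n L G \<Longrightarrow> z \<in> gen_ideal n L G \<Longrightarrow> x - y \<in> gen_ideal n L G"
  using gen_ideal.add[of "x - (y + z)" n L G z] by (simp add: algebra_simps)

lemma gen_ideal_diff_add_congr:
  assumes "x - (y + z) \<in> gen_ideal n L G" "y - y' \<in> gen_ideal n L G" "z - z' \<in> gen_ideal n L G"
  shows "x - (y' + z') \<in> gen_ideal n L G"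
proof -
  have "x - (y' + z') = (x - (y + z)) + (y - y') + (z - z')" by (simp add: algebra_simps)
  thus ?thesis using assms by (simp only: gen_ideal.add)
qed

lemma gen_ideal_diff_trans:
  "x - y \<in> gen_ideal n L G \<Longrightarrow> y - z \<in> gen_ideal n L G \<Longrightarrow> x - z \<in> gen_ideal n L G"
  using gen_ideal.add[of "x - y" n L G "y - z"] by simp

lemma subp_in_paths: "i < n \<Longrightarrow> j \<le> k \<Longrightarrow> k \<le> L i \<Longrightarrow> subp L i j k \<in> paths n L"
  by (auto simp: subp_def intro: vpos_in_vertices)

lemma mult_subp:
  assumes "i < n" "j \<le> k" "k \<le> l" "l \<le> L i"
  shows "mult n L (bv (subp L i j k)) (bv (subp L i k l)) = bv (subp L i j l)"
  using assms by (subst mult_bv) (auto simp: subp_def intro: subp_in_paths vpos_in_vertices)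

lemma mono_branch_in_ideal:
  assumes "i \<in> mono_branches n L (gen_ideal n L G)"
  shows "bv (branch L i) \<in> gen_ideal n L G"
proof -
  obtain j k where jk: "i < n" "j < k" "k \<le> L i" and I: "bv (Pth i j k) \<in> gen_ideal n L G"
    using assms unfolding mono_branches_def by blast
  have "mult n L (bv (subp L i 0 j)) (mult n L (bv (subp L i j k)) (bv (subp L i k (L i))))
      \<in> gen_ideal n L G"
    using jk I by (intro gen_ideal.lmult gen_ideal.rmult CQ_bv subp_in_paths) (auto simp: subp_def)
  moreover have "bv (subp L i 0 (L i)) = bv (branch L i)"
    using jk by (simp add: subp_def branch_def)
  ultimately show ?thesis using jk by (simp add: mult_subp)
qed

section \<open>Weight derivations and derivations modulo an ideal\<close>

definition weight_der :: "nat \<Rightarrow> (nat \<Rightarrow> nat) \<Rightarrow> (path \<Rightarrow> complex) \<Rightarrow> (path \<Rightarrow> complex) \<Rightarrow> (path \<Rightarrow> complex)"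
  where "weight_der n L w x = (\<lambda>r. if r \<in> paths n L then w r * x r else 0)"

definition additive_weight :: "(path \<Rightarrow> complex) \<Rightarrow> bool" where
  "additive_weight w \<longleftrightarrow> (\<forall>v. w (Triv v) = 0)
     \<and> (\<forall>i j m k. j < m \<longrightarrow> m < k \<longrightarrow> w (Pth i j k) = w (Pth i j m) + w (Pth i m k))"

lemma weight_der_in_CQ: "weight_der n L w x \<in> CQ n L"
  by (simp add: weight_der_def CQ_def)

lemma weight_der_add: "weight_der n L w (x + y) = weight_der n L w x + weight_der n L w y"
  by (rule ext) (simp add: weight_der_def algebra_simps)

lemma weight_der_diff: "weight_der n L w (x - y) = weight_der n L w x - weight_der n L w y"
  by (rule ext) (simp add: weight_der_def algebra_simps)

lemma weight_der_scal: "weight_der n L w (scal c x) = scal c (weight_der n L w x)"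
  by (rule ext) (simp add: weight_der_def scal_def algebra_simps)

lemma weight_der_sum: "weight_der n L w (\<Sum>i\<in>A. f i) = (\<Sum>i\<in>A. weight_der n L w (f i))"
  by (rule ext) (simp add: weight_der_def sum_apply sum_distrib_left)

lemma weight_der_bv: "p \<in> paths n L \<Longrightarrow> weight_der n L w (bv p) = scal (w p) (bv p)"
  by (rule ext) (simp add: weight_der_def scal_def bv_apply)

lemma weight_der_vertex: "additive_weight w \<Longrightarrow> weight_der n L w (bv (Triv v)) = 0"
  by (rule ext) (simp add: weight_der_def additive_weight_def bv_apply)

lemma weight_der_mult:
  assumes w: "additive_weight w"
  shows "weight_der n L w (mult n L x y)
       = mult n L (weight_der n L w x) y + mult n L x (weight_der n L w y)"
proof (rule ext)
  fix r
  show "weight_der n L w (mult n L x y) r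
      = (mult n L (weight_der n L w x) y + mult n L x (weight_der n L w y)) r"
  proof (cases "r \<in> paths n L")
    case False thus ?thesis by (simp add: weight_der_def mult_outside_paths)
  next
    case True
    show ?thesis
    proof (cases r)
      case (Triv v) thus ?thesis using True w by (simp add: weight_der_def mult_Triv additive_weight_def)
    next
      case (Pth i j k)
      have ik: "i < n" "j < k" "k \<le> L i" using True Pth by auto
      have "w (Pth i j k) * (\<Sum>m\<in>{j<..<k}. x (Pth i j m) * y (Pth i m k))
          = (\<Sum>m\<in>{j<..<k}. weight_der n L w x (Pth i j m) * y (Pth i m k))
          + (\<Sum>m\<in>{j<..<k}. x (Pth i j m) * weight_der n L w y (Pth i m k))"
        unfolding sum_distrib_left sum.distrib[symmetric]
        by (rule sum.cong) (use w ik in \<open>auto simp: additive_weight_def weight_der_def algebra_simps\<close>)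
      thus ?thesis using True Pth ik w
        by (simp add: mult_Pth weight_der_def additive_weight_def vpos_in_vertices algebra_simps)
    qed
  qed
qed

definition derivation_mod :: "nat \<Rightarrow> (nat \<Rightarrow> nat) \<Rightarrow> (path \<Rightarrow> complex) set
    \<Rightarrow> ((path \<Rightarrow> complex) \<Rightarrow> (path \<Rightarrow> complex)) \<Rightarrow> bool" where
  "derivation_mod n L I D \<longleftrightarrow>
     (\<forall>x\<in>CQ n L. \<forall>y\<in>CQ n L. D (x + y) - (D x + D y) \<in> I)
   \<and> (\<forall>c. \<forall>x\<in>CQ n L. D (scal c x) - scal c (D x) \<in> I)
   \<and> (\<forall>x\<in>CQ n L. \<forall>y\<in>CQ n L. D (mult n L x y) - (mult n L (D x) y + mult n L x (D y)) \<in> I)"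

lemma is_der_derivation_mod: "is_der n L I d \<Longrightarrow> derivation_mod n L I d"
  by (simp add: is_der_def derivation_mod_def)

lemma derivation_mod_zero:
  assumes "derivation_mod n L (gen_ideal n L G) D"
  shows "D 0 \<in> gen_ideal n L G"
proof -
  have "D (scal 0 0) - scal 0 (D 0) \<in> gen_ideal n L G"
    using assms unfolding derivation_mod_def CQ_def by simp
  moreover have "scal 0 (0 :: path \<Rightarrow> complex) = 0" "scal 0 (D 0) = 0" by (auto simp: scal_def)
  ultimately show ?thesis by simp
qed

lemma derivation_mod_vanishes_on_paths:
  assumes D: "derivation_mod n L (gen_ideal n L G) D"
    and vertices: "\<And>v. v \<in> vertices n L \<Longrightarrow> D (bv (Triv v)) \<in> gen_ideal n L G"
    and arrows: "\<And>j m. j < n \<Longrightarrow> m < L j \<Longrightarrow> D (bv (Pth j m (Suc m))) \<in> gen_ideal n L G"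
    and p: "p \<in> paths n L"
  shows "D (bv p) \<in> gen_ideal n L G"
proof (cases p)
  case (Triv v) thus ?thesis using p vertices by simp
next
  case (Pth i j k)
  have "Pth i j k \<in> paths n L \<Longrightarrow> D (bv (Pth i j k)) \<in> gen_ideal n L G"
  proof (induction k)
    case (Suc k)
    show ?case
    proof (cases "k = j")
      case True thus ?thesis using Suc.prems arrows by auto
    next
      case False
      hence p1: "Pth i j k \<in> paths n L" and p2: "Pth i k (Suc k) \<in> paths n L" using Suc.prems by auto
      have "D (mult n L (bv (Pth i j k)) (bv (Pth i k (Suc k))))
          - (mult n L (D (bv (Pth i j k))) (bv (Pth i k (Suc k)))
             + mult n L (bv (Pth i j k)) (D (bv (Pth i k (Suc k))))) \<in> gen_ideal n L G"
        using D p1 p2 CQ_bv unfolding derivation_mod_def by blast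
      moreover have "mult n L (D (bv (Pth i j k))) (bv (Pth i k (Suc k)))
          + mult n L (bv (Pth i j k)) (D (bv (Pth i k (Suc k)))) \<in> gen_ideal n L G"
        using Suc.IH[OF p1] arrows p2 p1
        by (intro gen_ideal.add gen_ideal.rmult gen_ideal.lmult CQ_bv) auto
      moreover have "mult n L (bv (Pth i j k)) (bv (Pth i k (Suc k))) = bv (Pth i j (Suc k))"
        using p1 p2 by (subst mult_bv) auto
      ultimately show ?thesis by (metis gen_ideal_diff_cancel)
    qed
  qed simp
  thus ?thesis using p Pth by simp
qed

lemma derivation_mod_vanishes:
  assumes D: "derivation_mod n L (gen_ideal n L G) D"
    and vertices: "\<And>v. v \<in> vertices n L \<Longrightarrow> D (bv (Triv v)) \<in> gen_ideal n L G"
    and arrows: "\<And>j m. j < n \<Longrightarrow> m < L j \<Longrightarrow> D (bv (Pth j m (Suc m))) \<in> gen_ideal n L G"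
    and x: "x \<in> CQ n L"
  shows "D x \<in> gen_ideal n L G"
proof -
  have "F \<subseteq> paths n L \<Longrightarrow> D (\<Sum>p\<in>F. scal (x p) (bv p)) \<in> gen_ideal n L G" for F
  proof (induction F rule: infinite_finite_induct)
    case (infinite F)
    thus ?case using finite_paths finite_subset by blast
  next
    case empty
    show ?case by (simp only: sum.empty derivation_mod_zero[OF D])
  next
    case (insert p F)
    have p: "p \<in> paths n L" "scal (x p) (bv p) \<in> CQ n L" and F: "(\<Sum>q\<in>F. scal (x q) (bv q)) \<in> CQ n L"
      using insert.prems by (auto intro!: CQ_sum CQ_scal CQ_bv)
    have "D (scal (x p) (bv p)) - scal (x p) (D (bv p)) \<in> gen_ideal n L G"
      using D p CQ_bv unfolding derivation_mod_def by blast
    hence Dp: "D (scal (x p) (bv p)) \<in> gen_ideal n L G"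
      by (rule gen_ideal_diff_cancel)
        (intro gen_ideal.smult derivation_mod_vanishes_on_paths[OF D vertices arrows p(1)])
    have "D (scal (x p) (bv p) + (\<Sum>q\<in>F. scal (x q) (bv q)))
        - (D (scal (x p) (bv p)) + D (\<Sum>q\<in>F. scal (x q) (bv q))) \<in> gen_ideal n L G"
      using D p F unfolding derivation_mod_def by blast
    hence "D (scal (x p) (bv p) + (\<Sum>q\<in>F. scal (x q) (bv q))) \<in> gen_ideal n L G"
      by (rule gen_ideal_diff_cancel) (use Dp insert in \<open>auto intro: gen_ideal.add\<close>)
    thus ?case by (simp only: sum.insert[OF insert.hyps])
  qed
  thus ?thesis using CQ_expand[OF x] by (metis order_refl)
qed

lemma derivation_mod_diff_weight_der:
  assumes D: "derivation_mod n L I D" and w: "additive_weight w"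
  shows "derivation_mod n L I (\<lambda>x. D x - weight_der n L w x)"
  unfolding derivation_mod_def
proof (intro conjI ballI allI)
  fix x y c assume x: "x \<in> CQ n L" and y: "y \<in> CQ n L"
  have eq1: "(D (x + y) - weight_der n L w (x + y))
      - ((D x - weight_der n L w x) + (D y - weight_der n L w y)) = D (x + y) - (D x + D y)"
    by (simp add: weight_der_add)
  show "(D (x + y) - weight_der n L w (x + y))
      - ((D x - weight_der n L w x) + (D y - weight_der n L w y)) \<in> I"
    unfolding eq1 using D x y unfolding derivation_mod_def by blast
  have eq2: "(D (scal c x) - weight_der n L w (scal c x)) - scal c (D x - weight_der n L w x)
      = D (scal c x) - scal c (D x)"
    by (simp add: weight_der_def scal_def fun_eq_iff algebra_simps)
  show "(D (scal c x) - weight_der n L w (scal c x)) - scal c (D x - weight_der n L w x) \<in> I"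
    unfolding eq2 using D x unfolding derivation_mod_def by blast
  have eq3: "(D (mult n L x y) - weight_der n L w (mult n L x y))
       - (mult n L (D x - weight_der n L w x) y + mult n L x (D y - weight_der n L w y))
      = D (mult n L x y) - (mult n L (D x) y + mult n L x (D y))"
    by (simp add: weight_der_mult[OF w] mult_diff_left mult_diff_right)
  show "(D (mult n L x y) - weight_der n L w (mult n L x y))
       - (mult n L (D x - weight_der n L w x) y + mult n L x (D y - weight_der n L w y)) \<in> I"
    unfolding eq3 using D x y unfolding derivation_mod_def by blast
qed

lemma derivation_mod_weight_der_commutator:
  assumes d: "is_der n L (gen_ideal n L G) d" and w: "additive_weight w"
    and preserves: "\<And>x. x \<in> gen_ideal n L G \<Longrightarrow> weight_der n L w x \<in> gen_ideal n L G"
  shows "derivation_mod n L (gen_ideal n L G) (\<lambda>x. weight_der n L w (d x) - d (weight_der n L w x))"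
    (is "derivation_mod n L ?I ?C")
  unfolding derivation_mod_def
proof (intro conjI ballI allI)
  let ?W = "weight_der n L w"
  have dadd: "d (x + y) - (d x + d y) \<in> ?I" and dscal: "d (scal c x) - scal c (d x) \<in> ?I"
    and dmult: "d (mult n L x y) - (mult n L (d x) y + mult n L x (d y)) \<in> ?I"
    if "x \<in> CQ n L" "y \<in> CQ n L" for x y c
    using d that unfolding is_der_def by blast+
  fix x y c assume x: "x \<in> CQ n L" and y: "y \<in> CQ n L"
  have eq: "?C (x + y) - (?C x + ?C y)
      = ?W (d (x + y) - (d x + d y)) - (d (?W x + ?W y) - (d (?W x) + d (?W y)))"
    by (simp add: weight_der_add weight_der_diff algebra_simps)
  show "?C (x + y) - (?C x + ?C y) \<in> ?I"
    unfolding eq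
    by (rule gen_ideal_diff[OF preserves[OF dadd[OF x y]] dadd[OF weight_der_in_CQ weight_der_in_CQ]])
  have eq: "?C (scal c x) - scal c (?C x)
      = ?W (d (scal c x) - scal c (d x)) - (d (scal c (?W x)) - scal c (d (?W x)))"
    by (simp add: weight_der_scal weight_der_diff) (simp add: scal_def fun_eq_iff algebra_simps)
  show "?C (scal c x) - scal c (?C x) \<in> ?I"
    unfolding eq
    by (rule gen_ideal_diff[OF preserves[OF dscal[OF x x]] dscal[OF weight_der_in_CQ weight_der_in_CQ]])
  have eq: "?C (mult n L x y) - (mult n L (?C x) y + mult n L x (?C y))
      = ?W (d (mult n L x y) - (mult n L (d x) y + mult n L x (d y)))
        - (d (mult n L (?W x) y + mult n L x (?W y)) - (d (mult n L (?W x) y) + d (mult n L x (?W y))))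
        - (d (mult n L (?W x) y) - (mult n L (d (?W x)) y + mult n L (?W x) (d y)))
        - (d (mult n L x (?W y)) - (mult n L (d x) (?W y) + mult n L x (d (?W y))))"
    by (simp add: weight_der_diff weight_der_add weight_der_mult[OF w] mult_diff_left mult_diff_right
        algebra_simps)
  show "?C (mult n L x y) - (mult n L (?C x) y + mult n L x (?C y)) \<in> ?I"
    unfolding eq
    by (intro gen_ideal_diff[OF gen_ideal_diff[OF gen_ideal_diff]] preserves dmult[OF x y]
        dadd[OF mult_in_CQ mult_in_CQ] dmult[OF weight_der_in_CQ y] dmult[OF x weight_der_in_CQ])
qed

section \<open>Derivations on paths inside one branch\<close>

definition corner :: "nat \<Rightarrow> (nat \<Rightarrow> nat) \<Rightarrow> vtx \<Rightarrow> vtx \<Rightarrow> (path \<Rightarrow> complex) \<Rightarrow> (path \<Rightarrow> complex)" where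
  "corner n L s t z = (\<lambda>r. if r \<in> paths n L \<and> psrc L r = s \<and> ptgt L r = t then z r else 0)"

lemma corner_eq_mult: "s \<in> vertices n L \<Longrightarrow> t \<in> vertices n L \<Longrightarrow>
    corner n L s t z = mult n L (bv (Triv s)) (mult n L z (bv (Triv t)))"
  by (rule ext) (simp add: mult_vertex_left mult_vertex_right corner_def)

text \<open>Apply the Leibniz rule to p = e_s p e_t, where d kills the idempotents e_s and e_t.\<close>

lemma der_corner:
  assumes d: "is_der n L (gen_ideal n L G) d" and p: "p \<in> paths n L"
  shows "d (bv p) - corner n L (psrc L p) (ptgt L p) (d (bv p)) \<in> gen_ideal n L G"
proof -
  let ?I = "gen_ideal n L G" and ?s = "bv (Triv (psrc L p))" and ?t = "bv (Triv (ptgt L p))"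
  have sv: "psrc L p \<in> vertices n L" and tv: "ptgt L p \<in> vertices n L"
    using p by (auto intro: psrc_in_vertices ptgt_in_vertices)
  have CQ: "?s \<in> CQ n L" "?t \<in> CQ n L" "bv p \<in> CQ n L" using sv tv p by (auto intro: CQ_bv)
  have "mult n L ?s (bv p) = bv p" "mult n L (bv p) ?t = bv p"
    using sv tv p by (cases p; simp add: mult_bv)+
  moreover have "d (mult n L ?s (bv p)) - (mult n L (d ?s) (bv p) + mult n L ?s (d (bv p))) \<in> ?I"
    and "d (mult n L (bv p) ?t) - (mult n L (d (bv p)) ?t + mult n L (bv p) (d ?t)) \<in> ?I"
    and "mult n L (d ?s) (bv p) \<in> ?I" and "mult n L (bv p) (d ?t) \<in> ?I"
    using d CQ sv tv unfolding is_der_def by (blast intro: gen_ideal.rmult gen_ideal.lmult)+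
  ultimately have left: "d (bv p) - mult n L ?s (d (bv p)) \<in> ?I"
    and right: "d (bv p) - mult n L (d (bv p)) ?t \<in> ?I"
    by (metis gen_ideal_diff_add_cancel_left gen_ideal_diff_add_cancel_right)+
  have "mult n L ?s (d (bv p)) - mult n L ?s (mult n L (d (bv p)) ?t) \<in> ?I"
    using gen_ideal.lmult[OF right CQ(1)] by (simp only: mult_diff_right)
  thus ?thesis using gen_ideal_diff_trans[OF left] by (simp add: corner_eq_mult[OF sv tv])
qed

lemma paths_parallel_to_long_branch_arrow:
  assumes "j < n" "2 \<le> L j" "m < L j"
    and "r \<in> paths n L" "psrc L r = vpos L j m" "ptgt L r = vpos L j (Suc m)"
  shows "r = Pth j m (Suc m)"
  using assms by (cases r) (auto simp: vpos_def split: if_splits)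

lemma paths_from_source_to_sink:
  assumes "r \<in> paths n L" "psrc L r = Src" "ptgt L r = Snk"
  shows "\<exists>k<n. r = branch L k"
  using assms by (cases r) (auto simp: vpos_def branch_def split: if_splits)

lemma der_arrow_long_branch:
  assumes d: "is_der n L (gen_ideal n L G) d" and j: "j < n" "2 \<le> L j" "m < L j"
  defines "g \<equiv> Pth j m (Suc m)"
  shows "d (bv g) - scal (d (bv g) g) (bv g) \<in> gen_ideal n L G"
proof -
  have "corner n L (psrc L g) (ptgt L g) (d (bv g)) = scal (d (bv g) g) (bv g)"
    using paths_parallel_to_long_branch_arrow[of j n L m] j
    by (auto simp: corner_def scal_apply bv_apply g_def fun_eq_iff)
  thus ?thesis using der_corner[OF d, of g] j by (simp add: g_def)
qed

lemma der_initial_segment_long_branch: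
  assumes d: "is_der n L (gen_ideal n L G) d" and k: "k < n" "2 \<le> L k"
    and m: "1 \<le> m" "m \<le> L k"
  shows "d (bv (Pth k 0 m))
      - scal (\<Sum>m'<m. d (bv (Pth k m' (Suc m'))) (Pth k m' (Suc m'))) (bv (Pth k 0 m))
      \<in> gen_ideal n L G"
  using m
proof (induction m)
  case (Suc m)
  let ?l = "\<lambda>m'. d (bv (Pth k m' (Suc m'))) (Pth k m' (Suc m'))"
  show ?case
  proof (cases "m = 0")
    case True
    have "(\<Sum>m'<Suc m. ?l m') = ?l 0" using True by simp
    moreover have "d (bv (Pth k 0 (Suc 0))) - scal (?l 0) (bv (Pth k 0 (Suc 0))) \<in> gen_ideal n L G"
      using der_arrow_long_branch[OF d k, of 0] k by simp
    ultimately show ?thesis using True by (simp only:)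
  next
    case False
    let ?p = "Pth k 0 m" and ?g = "Pth k m (Suc m)" and ?q = "Pth k 0 (Suc m)"
    have ps: "?p \<in> paths n L" "?g \<in> paths n L" using Suc.prems False k by auto
    have CQ: "bv ?p \<in> CQ n L" "bv ?g \<in> CQ n L" using ps by (auto intro: CQ_bv)
    have pg: "mult n L (bv ?p) (bv ?g) = bv ?q" using ps by (subst mult_bv) auto
    have IH: "d (bv ?p) - scal (\<Sum>m'<m. ?l m') (bv ?p) \<in> gen_ideal n L G"
      using Suc.prems False by (intro Suc.IH) auto
    have "d (bv ?q) - (mult n L (d (bv ?p)) (bv ?g) + mult n L (bv ?p) (d (bv ?g))) \<in> gen_ideal n L G"
      using d CQ unfolding is_der_def pg[symmetric] by blast
    moreover have "mult n L (d (bv ?p)) (bv ?g) - scal (\<Sum>m'<m. ?l m') (bv ?q) \<in> gen_ideal n L G"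
      using gen_ideal.rmult[OF IH CQ(2)] by (simp only: mult_diff_left mult_scal_left pg)
    moreover have "mult n L (bv ?p) (d (bv ?g)) - scal (?l m) (bv ?q) \<in> gen_ideal n L G"
      using gen_ideal.lmult[OF der_arrow_long_branch[OF d k, of m] CQ(1)] Suc.prems
      by (simp only: mult_diff_right mult_scal_right pg)
    ultimately have "d (bv ?q) - (scal (\<Sum>m'<m. ?l m') (bv ?q) + scal (?l m) (bv ?q)) \<in> gen_ideal n L G"
      by (rule gen_ideal_diff_add_congr)
    moreover have "scal (\<Sum>m'<m. ?l m') (bv ?q) + scal (?l m) (bv ?q) = scal (\<Sum>m'<Suc m. ?l m') (bv ?q)"
      by (simp add: scal_def fun_eq_iff algebra_simps)
    ultimately show ?thesis by (simp only:)
  qed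
qed simp

section \<open>The derivations y_i, inner derivations and span weights\<close>

lemma arrow_der_apply:
  "arrow_der n L i m h x r = (\<Sum>p\<in>paths n L. x p * arrow_contrib n L i m h p r)"
  by (simp add: arrow_der_def sum_apply scal_apply)

lemma arrow_contrib_y:
  assumes i: "i < n" "1 \<le> L i" and p: "p \<in> paths n L"
  shows "arrow_contrib n L i 0 (bv (Pth i 0 1)) p = (if \<exists>k. p = Pth i 0 k then bv p else 0)"
proof (cases "\<exists>k. p = Pth i 0 k")
  case True
  then obtain k where k: "p = Pth i 0 k" "0 < k" "k \<le> L i" using p by auto
  have "arrow_contrib n L i 0 (bv (subp L i 0 1)) p
      = mult n L (bv (subp L i 0 0)) (mult n L (bv (subp L i 0 1)) (bv (subp L i 1 k)))"
    using k by simp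
  also have "\<dots> = bv (subp L i 0 k)" using i k by (simp add: mult_subp)
  also have "\<dots> = bv p" using k by (simp add: subp_def)
  finally show ?thesis using True by (simp add: subp_def)
next
  case False thus ?thesis by (cases p) auto
qed

lemma y_der_eq:
  assumes "i < n" "1 \<le> L i"
  shows "y_der n L i = weight_der n L (\<lambda>r. if \<exists>k. r = Pth i 0 k then 1 else 0)"
proof (intro ext)
  fix x r
  have "y_der n L i x r = (\<Sum>p\<in>paths n L. if p = r then (if \<exists>k. r = Pth i 0 k then x r else 0) else 0)"
    unfolding y_der_def arrow_der_apply
  proof (rule sum.cong)
    fix p assume p: "p \<in> paths n L"
    show "x p * arrow_contrib n L i 0 (bv (Pth i 0 1)) p r
        = (if p = r then (if \<exists>k. r = Pth i 0 k then x r else 0) else 0)"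
      unfolding arrow_contrib_y[where i=i and n=n and L=L, OF assms p] by (auto simp: bv_apply)
  qed simp
  thus "y_der n L i x r = weight_der n L (\<lambda>r. if \<exists>k. r = Pth i 0 k then 1 else 0) x r"
    by (simp add: weight_der_def finite_paths)
qed

lemma inner_der_eq:
  assumes "in_E n L e"
  shows "inner_der n L e = weight_der n L (\<lambda>r. e (Triv (psrc L r)) - e (Triv (ptgt L r)))"
proof (intro ext)
  fix x r
  have "\<And>i j k. e (Pth i j k) = 0" using assms by (simp add: in_E_def)
  thus "inner_der n L e x r = weight_der n L (\<lambda>r. e (Triv (psrc L r)) - e (Triv (ptgt L r))) x r"
    by (cases "r \<in> paths n L"; cases r)
      (auto simp: inner_der_def weight_der_def mult_outside_paths mult_Triv mult_Pth algebra_simps)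
qed

definition span_weight :: "(nat \<Rightarrow> nat) \<Rightarrow> nat set \<Rightarrow> (nat \<Rightarrow> complex) \<Rightarrow> (vtx \<Rightarrow> complex) \<Rightarrow> path \<Rightarrow> complex"
  where "span_weight L M c pot r =
    (\<Sum>i\<in>M. if \<exists>k. r = Pth i 0 k then c i else 0) + (pot (psrc L r) - pot (ptgt L r))"

lemma span_weight_Triv [simp]: "span_weight L M c pot (Triv v) = 0"
  by (simp add: span_weight_def)

lemma span_weight_Pth:
  assumes "finite M"
  shows "span_weight L M c pot (Pth i j k)
      = (if i \<in> M \<and> j = 0 then c i else 0) + (pot (vpos L i j) - pot (vpos L i k))"
proof -
  have "(\<Sum>i'\<in>M. if \<exists>k'. Pth i j k = Pth i' 0 k' then c i' else 0)
      = (\<Sum>i'\<in>M. if i' = i then (if j = 0 then c i else 0) else 0)"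
    by (rule sum.cong) auto
  thus ?thesis using assms by (simp add: span_weight_def)
qed

lemma additive_span_weight: "finite M \<Longrightarrow> additive_weight (span_weight L M c pot)"
  by (auto simp: additive_weight_def span_weight_Pth)

lemma y_der_eq_span_weight:
  assumes "i < n" "1 \<le> L i"
  shows "y_der n L i = weight_der n L (span_weight L {i} (\<lambda>_. 1) (\<lambda>_. 0))"
proof -
  have "(\<lambda>r. if \<exists>k. r = Pth i 0 k then 1 else 0) = span_weight L {i} (\<lambda>_. 1) (\<lambda>_. 0)"
    by (simp add: span_weight_def fun_eq_iff)
  thus ?thesis using assms by (simp add: y_der_eq)
qed

lemma span_y_inner_der_eq:
  assumes M: "M \<subseteq> {..<n}" and L: "\<forall>i<n. 1 \<le> L i" and e: "in_E n L e"
  shows "(\<Sum>i\<in>M. scal (c i) (y_der n L i x)) + inner_der n L e x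
       = weight_der n L (span_weight L M c (\<lambda>v. e (Triv v))) x"
proof (rule ext)
  fix r
  have "(\<Sum>i\<in>M. scal (c i) (y_der n L i x)) r
      = (if r \<in> paths n L then (\<Sum>i\<in>M. if \<exists>k. r = Pth i 0 k then c i else 0) * x r else 0)"
  proof -
    have "(\<Sum>i\<in>M. scal (c i) (y_der n L i x)) r
        = (\<Sum>i\<in>M. c i * weight_der n L (\<lambda>r. if \<exists>k. r = Pth i 0 k then 1 else 0) x r)"
      unfolding sum_apply scal_apply using M L by (intro sum.cong) (auto simp: y_der_eq)
    thus ?thesis by (auto simp: weight_der_def sum_distrib_right intro!: sum.cong)
  qed
  thus "((\<Sum>i\<in>M. scal (c i) (y_der n L i x)) + inner_der n L e x) r
      = weight_der n L (span_weight L M c (\<lambda>v. e (Triv v))) x r"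
    by (simp add: inner_der_eq[OF e] weight_der_def span_weight_def algebra_simps)
qed

lemma mult_branch_left:
  assumes "b < n" "1 \<le> L b"
  shows "mult n L (bv (branch L b)) y = scal (y (Triv Snk)) (bv (branch L b))"
proof (rule ext)
  fix r
  have "(\<Sum>m\<in>{j<..<k}. bv (branch L b) (Pth i j m) * y (Pth i m k)) = 0" if "k \<le> L i" for i j k
    using that by (intro sum.neutral) (auto simp: bv_apply branch_def)
  thus "mult n L (bv (branch L b)) y r = scal (y (Triv Snk)) (bv (branch L b)) r"
    using assms by (cases "r \<in> paths n L"; cases r)
      (auto simp: mult_outside_paths mult_Triv mult_Pth bv_apply scal_apply vpos_def branch_def)
qed

lemma mult_branch_right:
  assumes "b < n" "1 \<le> L b"
  shows "mult n L y (bv (branch L b)) = scal (y (Triv Src)) (bv (branch L b))"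
proof (rule ext)
  fix r
  have "(\<Sum>m\<in>{j<..<k}. y (Pth i j m) * bv (branch L b) (Pth i m k)) = 0" for i j k
    by (intro sum.neutral) (auto simp: bv_apply branch_def)
  thus "mult n L y (bv (branch L b)) r = scal (y (Triv Src)) (bv (branch L b)) r"
    using assms by (cases "r \<in> paths n L"; cases r)
      (auto simp: mult_outside_paths mult_Triv mult_Pth bv_apply scal_apply vpos_def branch_def)
qed

text \<open>An arrow alpha^a_0 is called direct if it goes from 0 to omega, i.e. if L a = 1.\<close>

lemma direct_arrow_der_eq:
  assumes a: "a < n" "L a = 1" and b: "b < n" "1 \<le> L b"
  shows "arrow_der n L a 0 (bv (branch L b)) = (\<lambda>x. scal (x (Pth a 0 (Suc 0))) (bv (branch L b)))"
proof (intro ext)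
  fix x r
  have "arrow_contrib n L a 0 (bv (branch L b)) p = (if p = Pth a 0 (Suc 0) then bv (branch L b) else 0)"
    if "p \<in> paths n L" for p
  proof (cases "\<exists>k. p = Pth a 0 k")
    case True
    hence p: "p = Pth a 0 (Suc 0)" using that a by auto
    have "subp L a 0 0 = Triv Src" "subp L a 1 1 = Triv Snk" using a by (auto simp: subp_def vpos_def)
    moreover have "mult n L (bv (branch L b)) (bv (Triv Snk)) = bv (branch L b)"
      and "mult n L (bv (Triv Src)) (bv (branch L b)) = bv (branch L b)"
      using b by (simp_all add: mult_bv branch_def vpos_def vertices_def)
    ultimately show ?thesis using p by simp
  next
    case False thus ?thesis by (cases p) auto
  qed
  hence "arrow_der n L a 0 (bv (branch L b)) x r
      = (\<Sum>p\<in>paths n L. if p = Pth a 0 (Suc 0) then x (Pth a 0 (Suc 0)) * bv (branch L b) r else 0)"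
    unfolding arrow_der_apply by (intro sum.cong) auto
  thus "arrow_der n L a 0 (bv (branch L b)) x r = scal (x (Pth a 0 (Suc 0))) (bv (branch L b)) r"
    using a by (simp add: finite_paths scal_apply)
qed

text \<open>The potential of an interior vertex is the total prescribed weight of the arrows after it, so
  consecutive differences recover the weights of the arrows; the coefficients c i absorb the
  defect of the branch sums, which is only allowed on the branches in M.\<close>

lemma span_weight_interpolates_arrows:
  fixes lam :: "nat \<Rightarrow> nat \<Rightarrow> complex"
  assumes M: "finite M" and L: "\<forall>j<n. 1 \<le> L j"
    and direct_not_M: "\<And>j. j < n \<Longrightarrow> L j = 1 \<Longrightarrow> j \<notin> M"
    and direct: "\<And>j. j < n \<Longrightarrow> L j = 1 \<Longrightarrow> lam j 0 = \<Lambda>"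
    and long: "\<And>k. k < n \<Longrightarrow> 2 \<le> L k \<Longrightarrow> k \<notin> M \<Longrightarrow> (\<Sum>m<L k. lam k m) = \<Lambda>"
  obtains pot c where "\<And>v. v \<notin> vertices n L \<Longrightarrow> pot v = 0"
    and "\<And>j m. j < n \<Longrightarrow> m < L j \<Longrightarrow> span_weight L M c pot (Pth j m (Suc m)) = lam j m"
proof
  define pot where "pot v = (if v \<in> vertices n L then (case v of Src \<Rightarrow> \<Lambda> | Snk \<Rightarrow> 0
      | Mid j m \<Rightarrow> \<Sum>m'\<in>{m..<L j}. lam j m') else 0)" for v
  define c where "c i = (\<Sum>m<L i. lam i m) - \<Lambda>" for i
  show "v \<notin> vertices n L \<Longrightarrow> pot v = 0" for v by (simp add: pot_def)
  have pot_vpos: "pot (vpos L j m) = (if m = 0 then \<Lambda> else \<Sum>m'\<in>{m..<L j}. lam j m')"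
    if "j < n" "m \<le> L j" for j m
    using that L by (auto simp: pot_def vpos_def vertices_def)
  fix j m assume j: "j < n" and m: "m < L j"
  have split: "(\<Sum>m'\<in>{m..<L j}. lam j m') = lam j m + (\<Sum>m'\<in>{Suc m..<L j}. lam j m')"
    by (rule sum.atLeast_Suc_lessThan[OF m])
  show "span_weight L M c pot (Pth j m (Suc m)) = lam j m"
  proof (cases "m = 0")
    case False
    thus ?thesis using j m split M by (simp add: span_weight_Pth pot_vpos)
  next
    case m0: True
    have sum0: "(\<Sum>m<L j. lam j m) = (\<Sum>m'\<in>{0..<L j}. lam j m')" by (simp add: atLeast0LessThan)
    consider "L j = 1" | "2 \<le> L j" "j \<in> M" | "2 \<le> L j" "j \<notin> M" using L j by fastforce
    thus ?thesis
    proof cases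
      case 1 thus ?thesis using m0 j M direct direct_not_M by (simp add: span_weight_Pth pot_vpos)
    next
      case 2 thus ?thesis using m0 j M split sum0 by (simp add: span_weight_Pth pot_vpos c_def)
    next
      case 3 thus ?thesis using m0 j M split sum0 long[OF j] by (simp add: span_weight_Pth pot_vpos)
    qed
  qed
qed

lemma branch_combination_Pth:
  "(\<Sum>i<n. scal (c i) (bv (branch L i))) (Pth i j k) = (if i < n \<and> j = 0 \<and> k = L i then c i else 0)"
proof -
  have "(\<Sum>i'<n. scal (c i') (bv (branch L i')) (Pth i j k))
      = (\<Sum>i'<n. if i' = i then (if j = 0 \<and> k = L i then c i else 0) else 0)"
    by (rule sum.cong) (auto simp: scal_apply bv_apply branch_def)
  thus ?thesis by (simp add: sum_apply)
qed

lemma branch_combination_Triv: "(\<Sum>i<n. scal (c i) (bv (branch L i))) (Triv v) = 0"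
  by (simp add: sum_apply scal_apply bv_apply branch_def)

lemma mult_vanishes_on_vertices_and_arrows:
  assumes "(\<forall>v. x (Triv v) = 0) \<and> (\<forall>i j. x (Pth i j (Suc j)) = 0)"
  shows "(\<forall>v. mult n L a x (Triv v) = 0) \<and> (\<forall>i j. mult n L a x (Pth i j (Suc j)) = 0)"
    and "(\<forall>v. mult n L x a (Triv v) = 0) \<and> (\<forall>i j. mult n L x a (Pth i j (Suc j)) = 0)"
proof -
  have "{j<..<Suc j} = {}" for j :: nat by auto
  hence "mult n L a x (Pth i j (Suc j)) = 0" "mult n L x a (Pth i j (Suc j)) = 0" for i j
    using assms by (cases "Pth i j (Suc j) \<in> paths n L"; simp add: mult_Pth mult_outside_paths)+
  moreover have "mult n L a x (Triv v) = 0" "mult n L x a (Triv v) = 0" for v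
    using assms by (cases "v \<in> vertices n L"; simp add: mult_Triv mult_outside_paths)+
  ultimately show "(\<forall>v. mult n L a x (Triv v) = 0) \<and> (\<forall>i j. mult n L a x (Pth i j (Suc j)) = 0)"
    and "(\<forall>v. mult n L x a (Triv v) = 0) \<and> (\<forall>i j. mult n L x a (Pth i j (Suc j)) = 0)"
    by blast+
qed

section \<open>Toupie algebras\<close>

locale toupie_algebra =
  fixes n :: nat and L :: "nat \<Rightarrow> nat" and G :: "(path \<Rightarrow> complex) set"
  assumes branch_length_pos: "\<forall>i<n. 1 \<le> L i"
    and generators: "toupie_generators n L G"
begin

abbreviation I :: "(path \<Rightarrow> complex) set" where "I \<equiv> gen_ideal n L G"

lemma generator_cases:
  assumes "g \<in> G"
  obtains (monomial) i j k where "i < n" "j < k" "k \<le> L i" "2 \<le> k - j" "g = bv (Pth i j k)"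
  | (nonmonomial) c where "\<forall>i<n. L i = 1 \<longrightarrow> c i = 0" "g = (\<Sum>i<n. scal (c i) (bv (branch L i)))"
  using assms generators unfolding toupie_generators_def by blast

text \<open>Every generator is supported on paths of length at least 2 (for non-monomial relations this
  is admissibility), and this property is stable under multiplication.\<close>

lemma ideal_vanishes_on_vertices_and_arrows:
  "x \<in> I \<Longrightarrow> (\<forall>v. x (Triv v) = 0) \<and> (\<forall>i j. x (Pth i j (Suc j)) = 0)"
proof (induction rule: gen_ideal.induct)
  case (gen g)
  thus ?case
    by (cases rule: generator_cases) (auto simp: bv_apply branch_combination_Pth branch_combination_Triv)
next
  case (lmult x a) show ?case by (intro mult_vanishes_on_vertices_and_arrows(1) lmult.IH)
next
  case (rmult x a) show ?case by (intro mult_vanishes_on_vertices_and_arrows(2) rmult.IH)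
qed (auto simp: scal_apply)

lemma ideal_vanishes_on_arrows: "x \<in> I \<Longrightarrow> x (Pth i j (Suc j)) = 0"
  using ideal_vanishes_on_vertices_and_arrows by blast

lemma direct_branch_not_in_ideal:
  assumes "L j = 1"
  shows "bv (branch L j) \<notin> I"
proof
  assume "bv (branch L j) \<in> I"
  hence "bv (branch L j) (Pth j 0 (Suc 0)) = 0" by (rule ideal_vanishes_on_arrows)
  thus False using assms by (simp add: branch_def bv_apply)
qed

definition balanced_weight :: "(path \<Rightarrow> complex) \<Rightarrow> complex \<Rightarrow> bool" where
  "balanced_weight w \<Lambda> \<longleftrightarrow> additive_weight w \<and> (\<forall>k<n. bv (branch L k) \<notin> I \<longrightarrow> w (branch L k) = \<Lambda>)"

text \<open>A balanced weight derivation rescales every non-monomial relation by \<Lambda>, up to branches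
  lying in I.\<close>

lemma weight_der_preserves_ideal:
  assumes w: "balanced_weight w \<Lambda>" and x: "x \<in> I"
  shows "weight_der n L w x \<in> I"
  using x
proof (induction rule: gen_ideal.induct)
  case (gen g)
  thus ?case
  proof (cases rule: generator_cases)
    case (monomial i j k)
    hence "weight_der n L w g = scal (w (Pth i j k)) g" by (simp add: weight_der_bv)
    thus ?thesis using gen_ideal.smult[OF gen_ideal.gen[OF gen]] by simp
  next
    case (nonmonomial c)
    have bv_branch:
      "k < n \<Longrightarrow> weight_der n L w (bv (branch L k)) = scal (w (branch L k)) (bv (branch L k))" for k
      unfolding branch_def by (rule weight_der_bv) (use branch_length_pos in auto)
    have eq: "weight_der n L w g
        = scal \<Lambda> g + (\<Sum>k<n. scal (c k * (w (branch L k) - \<Lambda>)) (bv (branch L k)))"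
      unfolding nonmonomial(2) weight_der_sum weight_der_scal
      by (rule ext) (simp add: bv_branch sum_apply scal_apply sum.distrib[symmetric] sum_distrib_left
          algebra_simps)
    have terms: "scal (c k * (w (branch L k) - \<Lambda>)) (bv (branch L k)) \<in> I" if "k < n" for k
    proof (cases "bv (branch L k) \<in> I")
      case False
      hence "scal (c k * (w (branch L k) - \<Lambda>)) (bv (branch L k)) = 0"
        using w that by (simp add: balanced_weight_def scal_def fun_eq_iff)
      thus ?thesis by (simp add: gen_ideal.zero)
    qed (rule gen_ideal.smult)
    show ?thesis
      unfolding eq by (intro gen_ideal.add gen_ideal.smult gen_ideal.gen[OF gen] gen_ideal_sum terms) simp
  qed
next
  case zero
  have "weight_der n L w 0 = 0" by (simp add: weight_der_def fun_eq_iff)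
  thus ?case by (simp only: gen_ideal.zero)
next
  case (add x y) thus ?case unfolding weight_der_add by (intro gen_ideal.add add.IH)
next
  case (smult x c) thus ?case unfolding weight_der_scal by (intro gen_ideal.smult smult.IH)
next
  case (lmult x a)
  have "additive_weight w" using w by (simp add: balanced_weight_def)
  thus ?case unfolding weight_der_mult[OF \<open>additive_weight w\<close>]
    by (intro gen_ideal.add gen_ideal.lmult lmult weight_der_in_CQ)
next
  case (rmult x a)
  have "additive_weight w" using w by (simp add: balanced_weight_def)
  thus ?case unfolding weight_der_mult[OF \<open>additive_weight w\<close>]
    by (intro gen_ideal.add gen_ideal.rmult rmult weight_der_in_CQ)
qed

lemma weight_der_is_der:
  assumes w: "balanced_weight w \<Lambda>"
  shows "is_der n L I (weight_der n L w)"
proof -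
  have additive: "additive_weight w" using w by (simp add: balanced_weight_def)
  show ?thesis unfolding is_der_def
  proof (intro conjI ballI allI impI)
    fix x y assume "x - y \<in> I"
    thus "weight_der n L w x - weight_der n L w y \<in> I"
      using weight_der_preserves_ideal[OF w] by (simp only: weight_der_diff[symmetric])
  qed (simp_all add: weight_der_in_CQ weight_der_add weight_der_scal weight_der_mult[OF additive]
      weight_der_vertex[OF additive] gen_ideal.zero)
qed

lemma balanced_weight_on_arrow_corner:
  assumes w: "balanced_weight w \<Lambda>" and j: "j < n" "m < L j"
  defines "g \<equiv> Pth j m (Suc m)"
  shows "weight_der n L w (corner n L (psrc L g) (ptgt L g) z)
       - scal (w g) (corner n L (psrc L g) (ptgt L g) z) \<in> I"
proof -
  let ?z = "corner n L (psrc L g) (ptgt L g) z"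
  have diff: "weight_der n L w ?z - scal (w g) ?z = (\<lambda>r. if r \<in> paths n L \<and> psrc L r = psrc L g
      \<and> ptgt L r = ptgt L g then (w r - w g) * z r else 0)"
    by (rule ext) (auto simp: corner_def weight_der_def scal_apply algebra_simps)
  consider "2 \<le> L j" | "L j = 1" using branch_length_pos j by fastforce
  thus ?thesis
  proof cases
    case 1
    have "weight_der n L w ?z - scal (w g) ?z = 0"
      unfolding diff using paths_parallel_to_long_branch_arrow[of j n L m] j 1
      by (auto simp: fun_eq_iff g_def)
    thus ?thesis by (simp only: gen_ideal.zero)
  next
    case 2
    have ends: "psrc L g = Src" "ptgt L g = Snk" and g: "g = branch L j"
      using 2 j by (auto simp: g_def vpos_def branch_def)
    have wg: "w g = \<Lambda>"
      using w direct_branch_not_in_ideal[OF 2] j by (simp add: balanced_weight_def g)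
    have branch_ends: "k < n \<Longrightarrow> branch L k \<in> paths n L \<and> psrc L (branch L k) = Src
        \<and> ptgt L (branch L k) = Snk" for k
      using branch_length_pos by (auto simp: branch_def vpos_def)
    have eq: "weight_der n L w ?z - scal (w g) ?z
        = (\<Sum>k<n. scal ((w (branch L k) - \<Lambda>) * z (branch L k)) (bv (branch L k)))"
    proof (rule ext)
      fix r
      have "(\<Sum>k<n. scal ((w (branch L k) - \<Lambda>) * z (branch L k)) (bv (branch L k))) r
          = (\<Sum>k<n. if r = branch L k then (w r - \<Lambda>) * z r else 0)"
        unfolding sum_apply by (rule sum.cong) (auto simp: scal_apply bv_apply)
      also have "\<dots> = (if r \<in> paths n L \<and> psrc L r = Src \<and> ptgt L r = Snk then (w r - \<Lambda>) * z r else 0)"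
      proof (cases "r \<in> paths n L \<and> psrc L r = Src \<and> ptgt L r = Snk")
        case True
        then obtain k where k: "k < n" "r = branch L k" using paths_from_source_to_sink by blast
        have "(\<Sum>k'<n. if r = branch L k' then (w r - \<Lambda>) * z r else 0)
            = (\<Sum>k'<n. if k' = k then (w r - \<Lambda>) * z r else 0)"
          by (rule sum.cong) (auto simp: k branch_def)
        thus ?thesis using True k by simp
      next
        case False
        hence "\<forall>k<n. r \<noteq> branch L k" using branch_ends by blast
        hence "(\<Sum>k'<n. if r = branch L k' then (w r - \<Lambda>) * z r else 0) = 0" by simp
        thus ?thesis using False by (simp only: if_False)
      qed
      finally show "(weight_der n L w ?z - scal (w g) ?z) r
          = (\<Sum>k<n. scal ((w (branch L k) - \<Lambda>) * z (branch L k)) (bv (branch L k))) r"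
        unfolding diff by (simp add: ends wg)
    qed
    have terms: "scal ((w (branch L k) - \<Lambda>) * z (branch L k)) (bv (branch L k)) \<in> I" if "k < n" for k
    proof (cases "bv (branch L k) \<in> I")
      case False
      hence "scal ((w (branch L k) - \<Lambda>) * z (branch L k)) (bv (branch L k)) = 0"
        using w that by (simp add: balanced_weight_def scal_def fun_eq_iff)
      thus ?thesis by (simp only: gen_ideal.zero)
    qed (rule gen_ideal.smult)
    show ?thesis unfolding eq by (intro gen_ideal_sum terms) simp
  qed
qed

lemma weight_der_commutator_on_arrow:
  assumes w: "balanced_weight w \<Lambda>" and d: "is_der n L I d" and j: "j < n" "m < L j"
  defines "g \<equiv> Pth j m (Suc m)"
  shows "weight_der n L w (d (bv g)) - d (weight_der n L w (bv g)) \<in> I"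
proof -
  let ?W = "weight_der n L w" and ?s = "scal (w g)"
  define z where "z = d (bv g)"
  define z' where "z' = corner n L (psrc L g) (ptgt L g) z"
  have g: "g \<in> paths n L" using j by (simp add: g_def)
  have zz': "z - z' \<in> I" unfolding z_def z'_def by (rule der_corner[OF d g])
  have "?W (z - z') \<in> I" by (rule weight_der_preserves_ideal[OF w zz'])
  moreover have "?W z' - ?s z' \<in> I" unfolding z'_def g_def by (rule balanced_weight_on_arrow_corner[OF w j])
  moreover have "?s (z - z') \<in> I" by (rule gen_ideal.smult[OF zz'])
  moreover have "d (?s (bv g)) - ?s z \<in> I" using d g CQ_bv unfolding is_der_def z_def by blast
  moreover have "?W z - d (?W (bv g))
      = ?W (z - z') + (?W z' - ?s z') - ?s (z - z') - (d (?s (bv g)) - ?s z)"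
    by (simp add: weight_der_bv[OF g] weight_der_diff scal_def fun_eq_iff algebra_simps)
  ultimately show ?thesis unfolding z_def by (simp only: gen_ideal.add gen_ideal_diff)
qed

text \<open>The commutator is a derivation modulo I vanishing on vertices and arrows.\<close>

lemma weight_der_commutes_with_der:
  assumes w: "balanced_weight w \<Lambda>" and d: "is_der n L I d" and x: "x \<in> CQ n L"
  shows "weight_der n L w (d x) - d (weight_der n L w x) \<in> I"
proof -
  have additive: "additive_weight w" using w by (simp add: balanced_weight_def)
  have "derivation_mod n L I (\<lambda>x. weight_der n L w (d x) - d (weight_der n L w x))"
    by (rule derivation_mod_weight_der_commutator[OF d additive weight_der_preserves_ideal[OF w]])
  thus ?thesis
  proof (rule derivation_mod_vanishes[OF _ _ _ x])
    fix v assume "v \<in> vertices n L"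
    hence "weight_der n L w (d (bv (Triv v))) \<in> I"
      using d by (intro weight_der_preserves_ideal[OF w]) (simp add: is_der_def)
    moreover have "d 0 \<in> I" by (rule derivation_mod_zero[OF is_der_derivation_mod[OF d]])
    ultimately show "weight_der n L w (d (bv (Triv v))) - d (weight_der n L w (bv (Triv v))) \<in> I"
      by (simp only: weight_der_vertex[OF additive] gen_ideal_diff)
  qed (rule weight_der_commutator_on_arrow[OF w d])
qed

lemma span_weight_balanced:
  assumes "M \<subseteq> mono_branches n L I"
  shows "balanced_weight (span_weight L M c pot) (pot Src - pot Snk)"
proof -
  have M: "finite M" "M \<subseteq> {..<n}"
    using assms finite_subset[of M "{..<n}"] by (auto simp: mono_branches_def)
  have "span_weight L M c pot (branch L k) = pot Src - pot Snk"
    if "k < n" "bv (branch L k) \<notin> I" for k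
  proof -
    have "k \<notin> M" using that assms mono_branch_in_ideal by blast
    moreover have "1 \<le> L k" using that branch_length_pos by simp
    ultimately show ?thesis using M by (simp add: branch_def span_weight_Pth vpos_def)
  qed
  thus ?thesis using M by (simp add: balanced_weight_def additive_span_weight)
qed

lemma y_der_is_der:
  assumes "i \<in> mono_branches n L I"
  shows "is_der n L I (y_der n L i)"
proof -
  have "i < n" using assms by (simp add: mono_branches_def)
  hence "y_der n L i = weight_der n L (span_weight L {i} (\<lambda>_. 1) (\<lambda>_. 0))"
    using branch_length_pos by (simp add: y_der_eq_span_weight)
  moreover have "balanced_weight (span_weight L {i} (\<lambda>_. 1) (\<lambda>_. 0)) 0"
    using span_weight_balanced[of "{i}" "\<lambda>_. 1" "\<lambda>_. 0"] assms by simp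
  ultimately show ?thesis by (simp add: weight_der_is_der)
qed

lemma in_span_y_imp_central:
  assumes d: "is_der n L I d" and M: "M \<subseteq> mono_branches n L I" and span: "in_span_y n L I M d"
  shows "hh1_central n L I d"
  unfolding hh1_central_def
proof (intro allI impI exI conjI ballI)
  from span obtain c e where e: "in_E n L e"
    and de: "\<And>x. x \<in> CQ n L \<Longrightarrow> d x - (\<Sum>i\<in>M. scal (c i) (y_der n L i x)) - inner_der n L e x \<in> I"
    unfolding in_span_y_def by blast
  let ?w = "span_weight L M c (\<lambda>v. e (Triv v))"
  have "M \<subseteq> {..<n}" using M by (auto simp: mono_branches_def)
  hence dW: "d x - weight_der n L ?w x \<in> I" if "x \<in> CQ n L" for x
    using de[OF that] by (simp only: diff_diff_eq span_y_inner_der_eq[OF _ branch_length_pos e])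
  fix d' x assume d': "is_der n L I d'" and x: "x \<in> CQ n L"
  have "d (d' x) - weight_der n L ?w (d' x) \<in> I" using d' x by (intro dW) (simp add: is_der_def)
  moreover have "d' (d x) - d' (weight_der n L ?w x) \<in> I"
  proof -
    have "d x \<in> CQ n L" using d x by (simp add: is_der_def)
    thus ?thesis using d' dW[OF x] weight_der_in_CQ unfolding is_der_def by blast
  qed
  moreover have "weight_der n L ?w (d' x) - d' (weight_der n L ?w x) \<in> I"
    by (rule weight_der_commutes_with_der[OF span_weight_balanced[OF M] d' x])
  moreover have "d (d' x) - d' (d x) - inner_der n L 0 x
      = (d (d' x) - weight_der n L ?w (d' x)) - (d' (d x) - d' (weight_der n L ?w x))
        + (weight_der n L ?w (d' x) - d' (weight_der n L ?w x))"
    by (simp add: inner_der_def)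
  ultimately show "d (d' x) - d' (d x) - inner_der n L 0 x \<in> I"
    by (simp only: gen_ideal.add gen_ideal_diff)
qed (simp add: in_E_def CQ_def)

lemma direct_arrow_der_apply:
  "a < n \<Longrightarrow> L a = 1 \<Longrightarrow> b < n \<Longrightarrow>
    arrow_der n L a 0 (bv (branch L b)) x = scal (x (Pth a 0 (Suc 0))) (bv (branch L b))"
  using direct_arrow_der_eq[of a n L b] branch_length_pos by simp

lemma direct_arrow_der_is_der:
  assumes a: "a < n" "L a = 1" and b: "b < n"
  shows "is_der n L I (arrow_der n L a 0 (bv (branch L b)))"
proof -
  let ?g = "Pth a 0 (Suc 0)" and ?h = "bv (branch L b)"
  have b1: "1 \<le> L b" using branch_length_pos b by simp
  have h: "?h \<in> CQ n L" using b b1 by (intro CQ_bv) (simp add: branch_def)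
  have "{0<..<Suc 0} = ({} :: nat set)" by auto
  hence mult_g: "mult n L x y ?g = x (Triv Src) * y ?g + x ?g * y (Triv Snk)" for x y
    using a by (simp add: mult_Pth vpos_def)
  have zero: "X = 0 \<Longrightarrow> X \<in> I" for X by (simp add: gen_ideal.zero)
  show ?thesis
    unfolding direct_arrow_der_eq[OF a b b1] is_der_def
  proof (intro conjI ballI allI impI zero CQ_scal[OF h])
    fix x y assume "x - y \<in> I"
    hence "x ?g = y ?g" using ideal_vanishes_on_arrows[of "x - y" a 0] by simp
    thus "scal (x ?g) ?h - scal (y ?g) ?h = 0" by simp
  next
    fix x y
    show "scal (mult n L x y ?g) ?h - (mult n L (scal (x ?g) ?h) y + mult n L x (scal (y ?g) ?h)) = 0"
      unfolding mult_scal_left mult_scal_right mult_branch_left[of b n L, OF b b1]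
        mult_branch_right[of b n L, OF b b1]
      by (simp add: mult_g scal_def fun_eq_iff algebra_simps)
  qed (auto simp: CQ_scal h scal_def bv_apply fun_eq_iff algebra_simps)
qed

lemma central_commutator_direct_arrow:
  assumes cen: "hh1_central n L I d" and D: "is_der n L I D" and j: "j < n" "L j = 1"
  obtains \<nu> where "d (D (bv (Pth j 0 (Suc 0)))) - D (d (bv (Pth j 0 (Suc 0))))
      - scal \<nu> (bv (Pth j 0 (Suc 0))) \<in> I"
proof -
  let ?g = "Pth j 0 (Suc 0)"
  obtain e where e: "in_E n L e"
    and de: "\<forall>x\<in>CQ n L. d (D x) - D (d x) - inner_der n L e x \<in> I"
    using cen D unfolding hh1_central_def by blast
  have g: "?g \<in> paths n L" using j by simp
  have "inner_der n L e (bv ?g) = scal (e (Triv Src) - e (Triv Snk)) (bv ?g)"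
    using j by (simp add: inner_der_eq[OF e] weight_der_bv[OF g] vpos_def)
  moreover have "d (D (bv ?g)) - D (d (bv ?g)) - inner_der n L e (bv ?g) \<in> I"
    using de CQ_bv[OF g] by blast
  ultimately show ?thesis by (intro that) simp
qed

lemma central_der_direct_arrow:
  assumes cen: "hh1_central n L I d" and j: "j < n" "L j = 1"
  defines "g \<equiv> Pth j 0 (Suc 0)"
  shows "d (bv g) - scal (d (bv g) g) (bv g) \<in> I"
proof -
  have g: "g \<in> paths n L" using j by (simp add: g_def)
  have D: "arrow_der n L j 0 (bv (branch L j)) x = scal (x g) (bv g)" for x
    using direct_arrow_der_apply[OF j j(1)] j by (simp add: branch_def g_def)
  obtain \<nu> where "d (arrow_der n L j 0 (bv (branch L j)) (bv g))
      - arrow_der n L j 0 (bv (branch L j)) (d (bv g)) - scal \<nu> (bv g) \<in> I"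
    using central_commutator_direct_arrow[OF cen direct_arrow_der_is_der[OF j j(1)] j]
    unfolding g_def by blast
  moreover have "scal (bv g g) (bv g) = bv g" by (simp add: scal_def bv_apply fun_eq_iff)
  ultimately have \<nu>: "d (bv g) - scal (d (bv g) g) (bv g) - scal \<nu> (bv g) \<in> I"
    unfolding D by simp
  have "\<nu> = 0" using ideal_vanishes_on_arrows[OF \<nu>, of j 0] by (simp add: g_def scal_apply bv_apply)
  hence "scal \<nu> (bv g) = 0" by (simp add: scal_def fun_eq_iff)
  with \<nu> show ?thesis unfolding diff_zero by simp
qed

lemma central_der_direct_arrows_agree:
  assumes cen: "hh1_central n L I d" and j: "j < n" "L j = 1" and a: "a < n" "L a = 1"
  shows "d (bv (Pth j 0 (Suc 0))) (Pth j 0 (Suc 0)) = d (bv (Pth a 0 (Suc 0))) (Pth a 0 (Suc 0))"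
proof (cases "j = a")
  case False
  let ?g = "Pth j 0 (Suc 0)" and ?h = "Pth a 0 (Suc 0)"
  have h: "bv (branch L a) = bv ?h" using a by (simp add: branch_def)
  have D: "arrow_der n L j 0 (bv (branch L a)) x = scal (x ?g) (bv ?h)" for x
    using direct_arrow_der_apply[OF j a(1)] h by simp
  obtain \<nu> where "d (arrow_der n L j 0 (bv (branch L a)) (bv ?g))
      - arrow_der n L j 0 (bv (branch L a)) (d (bv ?g)) - scal \<nu> (bv ?g) \<in> I"
    using central_commutator_direct_arrow[OF cen direct_arrow_der_is_der[OF j a(1)] j] by blast
  moreover have "scal (bv ?g ?g) (bv ?h) = bv ?h" by (simp add: scal_def bv_apply fun_eq_iff)
  ultimately have "d (bv ?h) - scal (d (bv ?g) ?g) (bv ?h) - scal \<nu> (bv ?g) \<in> I"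
    unfolding D by simp
  from ideal_vanishes_on_arrows[OF this, of a 0] show ?thesis
    using False by (simp add: scal_apply bv_apply)
qed simp

lemma central_der_branch_sum:
  assumes d: "is_der n L I d" and cen: "hh1_central n L I d"
    and k: "k < n" "2 \<le> L k" "k \<notin> mono_branches n L I" and a: "a < n" "L a = 1"
  shows "(\<Sum>m<L k. d (bv (Pth k m (Suc m))) (Pth k m (Suc m)))
       = d (bv (Pth a 0 (Suc 0))) (Pth a 0 (Suc 0))"
    (is "?S = ?l")
proof (rule ccontr)
  assume ne: "?S \<noteq> ?l"
  let ?g = "Pth a 0 (Suc 0)" and ?b = "bv (branch L k)"
  have D: "arrow_der n L a 0 ?b x = scal (x ?g) ?b" for x
    using direct_arrow_der_apply[OF a k(1)] by simp
  obtain \<nu> where "d (arrow_der n L a 0 ?b (bv ?g)) - arrow_der n L a 0 ?b (d (bv ?g)) - scal \<nu> (bv ?g) \<in> I"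
    using central_commutator_direct_arrow[OF cen direct_arrow_der_is_der[OF a k(1)] a] by blast
  moreover have "scal (bv ?g ?g) ?b = ?b" by (simp add: scal_def bv_apply fun_eq_iff)
  ultimately have commutator: "d ?b - scal ?l ?b - scal \<nu> (bv ?g) \<in> I"
    unfolding D by simp
  have "d ?b - scal ?S ?b \<in> I"
    using der_initial_segment_long_branch[OF d k(1,2), of "L k"] k by (simp add: branch_def)
  from gen_ideal_diff[OF commutator this]
  have diff: "scal (?S - ?l) ?b - scal \<nu> (bv ?g) \<in> I"
    by (simp add: scal_def algebra_simps fun_diff_def)
  have "branch L k \<noteq> ?g" using k by (auto simp: branch_def)
  hence "\<nu> = 0" using ideal_vanishes_on_arrows[OF diff, of a 0] by (simp add: scal_apply bv_apply)
  hence "scal (1 / (?S - ?l)) (scal (?S - ?l) ?b - scal \<nu> (bv ?g)) = ?b"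
    using ne by (simp add: scal_def fun_eq_iff)
  moreover have "scal (1 / (?S - ?l)) (scal (?S - ?l) ?b - scal \<nu> (bv ?g)) \<in> I"
    by (rule gen_ideal.smult[OF diff])
  ultimately have "?b \<in> I" by simp
  thus False using k by (auto simp: mono_branches_def branch_def)
qed

lemma central_der_scales_arrows:
  assumes d: "is_der n L I d" and cen: "hh1_central n L I d" and j: "j < n" "m < L j"
  defines "g \<equiv> Pth j m (Suc m)"
  shows "d (bv g) - scal (d (bv g) g) (bv g) \<in> I"
proof (cases "L j = 1")
  case True
  thus ?thesis using central_der_direct_arrow[OF cen j(1) True] j by (simp add: g_def)
next
  case False
  hence "2 \<le> L j" using branch_length_pos j by fastforce
  thus ?thesis unfolding g_def by (rule der_arrow_long_branch[OF d j(1) _ j(2)])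
qed

lemma central_imp_in_span_y:
  assumes d: "is_der n L I d" and cen: "hh1_central n L I d" and a: "num_a n L > 0"
  shows "in_span_y n L I (mono_branches n L I) d"
proof -
  let ?M = "mono_branches n L I"
  define lam where "lam j m = d (bv (Pth j m (Suc m))) (Pth j m (Suc m))" for j m
  have "{i. i < n \<and> L i = 1} \<noteq> {}" using a unfolding num_a_def by (metis card.empty less_irrefl)
  then obtain a0 where a0: "a0 < n" "L a0 = 1" by blast
  have M: "finite ?M" by (rule finite_subset[of _ "{..<n}"]) (auto simp: mono_branches_def)
  obtain pot c where pot: "\<And>v. v \<notin> vertices n L \<Longrightarrow> pot v = 0"
    and interp: "\<And>j m. j < n \<Longrightarrow> m < L j \<Longrightarrow> span_weight L ?M c pot (Pth j m (Suc m)) = lam j m"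
  proof (rule span_weight_interpolates_arrows[OF M branch_length_pos])
    show "j \<notin> ?M" if "j < n" "L j = 1" for j
      using direct_branch_not_in_ideal[OF that(2)] mono_branch_in_ideal by blast
    show "lam j 0 = lam a0 0" if "j < n" "L j = 1" for j
      using central_der_direct_arrows_agree[OF cen that a0] by (simp add: lam_def)
    show "(\<Sum>m<L k. lam k m) = lam a0 0" if "k < n" "2 \<le> L k" "k \<notin> ?M" for k
      using central_der_branch_sum[OF d cen that a0] by (simp add: lam_def)
  qed (rule that)
  define e where "e r = (case r of Triv v \<Rightarrow> pot v | Pth _ _ _ \<Rightarrow> 0)" for r
  have e: "in_E n L e" unfolding in_E_def CQ_def
  proof (intro conjI allI impI CollectI)
    fix p assume "p \<notin> paths n L"
    thus "e p = 0" by (cases p) (auto simp: e_def pot)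
  qed (simp add: e_def)
  have pot_e: "(\<lambda>v. e (Triv v)) = pot" by (simp add: e_def fun_eq_iff)
  let ?w = "span_weight L ?M c pot"
  have additive: "additive_weight ?w" using M by (rule additive_span_weight)
  have "derivation_mod n L I (\<lambda>x. d x - weight_der n L ?w x)"
    by (rule derivation_mod_diff_weight_der[OF is_der_derivation_mod[OF d] additive])
  hence main: "d x - weight_der n L ?w x \<in> I" if x: "x \<in> CQ n L" for x
  proof (rule derivation_mod_vanishes[OF _ _ _ x])
    fix v assume "v \<in> vertices n L"
    thus "d (bv (Triv v)) - weight_der n L ?w (bv (Triv v)) \<in> I"
      using d by (simp add: weight_der_vertex[OF additive] is_der_def)
  next
    fix j m assume j: "j < n" "m < L j"
    thus "d (bv (Pth j m (Suc m))) - weight_der n L ?w (bv (Pth j m (Suc m))) \<in> I"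
      using central_der_scales_arrows[OF d cen j] by (simp add: weight_der_bv interp lam_def)
  qed
  have Msub: "?M \<subseteq> {..<n}" by (auto simp: mono_branches_def)
  show ?thesis unfolding in_span_y_def
  proof (intro exI[of _ c] exI[of _ e] conjI ballI)
    show "in_E n L e" by (rule e)
  next
    fix x assume "x \<in> CQ n L"
    thus "d x - (\<Sum>i\<in>?M. scal (c i) (y_der n L i x)) - inner_der n L e x \<in> I"
      unfolding diff_diff_eq span_y_inner_der_eq[OF Msub branch_length_pos e] pot_e by (rule main)
  qed
qed

end

theorem proposition6p2:
  fixes n :: nat and L :: "nat \<Rightarrow> nat" and G :: "(path \<Rightarrow> complex) set"
  assumes "\<forall>i<n. 1 \<le> L i"
    and "toupie_generators n L G"
    and "num_a n L > 0"
  shows "(\<forall>i\<in>mono_branches n L (gen_ideal n L G). is_der n L (gen_ideal n L G) (y_der n L i))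
       \<and> (\<forall>d. is_der n L (gen_ideal n L G) d \<longrightarrow>
            (hh1_central n L (gen_ideal n L G) d
             \<longleftrightarrow> in_span_y n L (gen_ideal n L G) (mono_branches n L (gen_ideal n L G)) d))"
proof -
  interpret toupie_algebra n L G using assms(1,2) by unfold_locales
  show ?thesis
    using y_der_is_der in_span_y_imp_central[OF _ order_refl] central_imp_in_span_y[OF _ _ assms(3)]
    by blast
qed

end
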